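(* Let $\sigma=(a_1,\ldots,a_s)$ be an $r$-good partition of $r$ and let $H=H(n,r,q\mid\sigma)$. Let $A,B$ be disjoint sets with $A\cup B=\{1,\ldots,s\}$ such that, with $a=\sum_{j\in A}a_j$ and $b=\sum_{j\in B}a_j$, one has $\gcd(a,b)=\gcd(a,r)=\gcd(b,r)=1$, and let $L=\mathrm{lcm}(a,b)$. Then: (1) If either ($r\mid q$ and $n\ge s$) or ($r\mid n$ and $q\ge (L-1)(r-1)$), then $H$ has a perfect matching, i.e. $\nu(H)=\frac{qn}{r}$. (2) If $q\ge L(r-1)$ and $n\ge s$, then $H$ has a matching leaving at most $L(r-1)^2$ vertices unmatched; that is, $\nu(H)\ge \frac{qn-L(r-1)^2}{r}$. (3) If $q\ge L(r^2-1)$, $s\ge 3$ and $n\ge s+r$, then $H$ has a matching leaving at most $(r-1)^2$ vertices unmatched; that is, $\nu(H)\ge\frac{qn-(r-1)^2}{r}$.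
   Context: A $\sigma$-hypergraph $H=H(n,r,q\mid\sigma)$, for a partition $\sigma=(a_1,\ldots,a_s)$ of $r$ with $s=s(\sigma)$ parts, is the $r$-uniform hypergraph whose vertex set is the disjoint union of $n$ classes $V_1,\ldots,V_n$, each of size $q$; an $r$-subset $K$ of vertices is an edge iff the multiset of non-zero values $|K\cap V_i|$ ($1\le i\le n$) equals $\sigma$. The partition $\sigma$ is $r$-good if there is a subsequence $\pi$ of $(a_1,\ldots,a_s)$ (a selection of some of the parts, by index) such that $\sum_{a_j\in\pi}a_j$ is coprime to $r$. A matching is a set of pairwise vertex-disjoint edges; it is perfect if it covers every vertex; $\nu(H)$ is the maximum size of a matching. *)

theory Defs
  imports Complex_Main "HOL-Library.Multiset"
begin

definition is_partition :: "nat list \<Rightarrow> nat \<Rightarrow> bool" where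
  "is_partition \<sigma> r \<longleftrightarrow> (\<forall>a\<in>set \<sigma>. 0 < a) \<and> sum_list \<sigma> = r"

definition r_good :: "nat list \<Rightarrow> nat \<Rightarrow> bool" where
  "r_good \<sigma> r \<longleftrightarrow> (\<exists>J. J \<subseteq> {..<length \<sigma>} \<and> J \<noteq> {} \<and> coprime (\<Sum>j\<in>J. \<sigma> ! j) r)"

text \<open>Vertices: (i, x) with i < n (class index) and x < q; class V_i = {(i,x). x < q}.\<close>
definition sh_vertices :: "nat \<Rightarrow> nat \<Rightarrow> (nat \<times> nat) set" where
  "sh_vertices n q = {..<n} \<times> {..<q}"

definition sh_class :: "nat \<Rightarrow> nat \<Rightarrow> (nat \<times> nat) set" where
  "sh_class q i = {i} \<times> {..<q}"

definition sh_edges :: "nat \<Rightarrow> nat \<Rightarrow> nat \<Rightarrow> nat list \<Rightarrow> (nat \<times> nat) set set" where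
  "sh_edges n r q \<sigma> = {K. K \<subseteq> sh_vertices n q \<and> card K = r \<and>
      image_mset (\<lambda>i. card (K \<inter> sh_class q i))
        (filter_mset (\<lambda>i. card (K \<inter> sh_class q i) \<noteq> 0) (mset_set {..<n})) = mset \<sigma>}"

definition is_matching :: "'v set set \<Rightarrow> 'v set set \<Rightarrow> bool" where
  "is_matching E M \<longleftrightarrow> M \<subseteq> E \<and> (\<forall>e\<in>M. \<forall>f\<in>M. e \<noteq> f \<longrightarrow> e \<inter> f = {})"

definition is_perfect_matching :: "'v set \<Rightarrow> 'v set set \<Rightarrow> 'v set set \<Rightarrow> bool" where
  "is_perfect_matching V E M \<longleftrightarrow> is_matching E M \<and> \<Union>M = V"

definition matching_number :: "'v set set \<Rightarrow> nat" where
  "matching_number E = Max {card M | M. is_matching E M \<and> finite M}"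

end

theory Submission
  imports Defs "HOL-Number_Theory.Cong"
begin

text \<open>A matching of \<open>H(n, r, q | \<sigma>)\<close> is determined, up to the choice of vertices inside the
  classes, by the list of its edge profiles (how many vertices each edge takes in each class); any
  list of profiles whose total load on every class is at most \<open>q\<close> is realised by a matching.
  Rotating the parts of \<open>\<sigma>\<close> cyclically through \<open>N \<ge> s\<close> classes, in all \<open>N\<close> positions, loads each
  of them with \<open>r\<close>. Rotating the parts in \<open>A\<close> through \<open>a k\<close> classes and simultaneously those in
  \<open>B\<close> through \<open>b k\<close> further classes, in \<open>k a b\<close> steps, loads each of these \<open>r k\<close> classes with
  \<open>a b = L\<close>. Since \<open>L\<close> is coprime to \<open>r\<close> there is \<open>Y < r\<close> with \<open>L Y \<equiv> q (mod r)\<close>; once \<open>L Y \<le> q\<close>,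
  writing \<open>q = X r + Y L\<close>, \<open>X\<close> cyclic rotations over all classes together with \<open>Y\<close> block rotations
  over the first \<open>r \<lfloor>n/r\<rfloor>\<close> classes fill those classes exactly, and only the \<open>n mod r < r\<close>
  remaining classes fall short, each by \<open>L Y \<le> L (r - 1)\<close>.\<close>

section \<open>Matchings from edge profiles\<close>

definition edge_profile :: "nat \<Rightarrow> nat list \<Rightarrow> (nat \<Rightarrow> nat) \<Rightarrow> bool" where
  "edge_profile n \<sigma> c \<longleftrightarrow>
     image_mset c (filter_mset (\<lambda>i. c i \<noteq> 0) (mset_set {..<n})) = mset \<sigma>"

definition load :: "(nat \<Rightarrow> nat) list \<Rightarrow> nat \<Rightarrow> nat" where
  "load cs i = (\<Sum>c\<leftarrow>cs. c i)"

lemma load_Nil [simp]: "load [] i = 0"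
  by (simp add: load_def)

lemma load_append [simp]: "load (cs @ ds) i = load cs i + load ds i"
  by (simp add: load_def)

lemma load_concat_replicate [simp]: "load (concat (replicate k cs)) i = k * load cs i"
  by (induction k) auto

lemma load_conv_sum_nth: "load cs i = (\<Sum>k<length cs. (cs ! k) i)"
  by (simp add: load_def sum_list_sum_nth atLeast0LessThan)

lemma sum_edge_profile:
  assumes "edge_profile n \<sigma> c"
  shows "(\<Sum>i<n. c i) = sum_list \<sigma>"
proof -
  have "sum_list \<sigma> = sum_mset (image_mset c (mset_set {i\<in>{..<n}. c i \<noteq> 0}))"
    using assms by (simp add: edge_profile_def sum_mset_sum_list [symmetric])
  also have "\<dots> = (\<Sum>i\<in>{i\<in>{..<n}. c i \<noteq> 0}. c i)"
    by (simp add: sum_unfold_sum_mset)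
  also have "\<dots> = (\<Sum>i<n. c i)"
    by (rule sum.mono_neutral_left) auto
  finally show ?thesis by simp
qed

lemma sum_load:
  assumes "\<forall>c\<in>set cs. edge_profile n \<sigma> c"
  shows "(\<Sum>i<n. load cs i) = sum_list \<sigma> * length cs"
  using assms
proof (induction cs)
  case (Cons c cs)
  have "(\<Sum>i<n. load (c # cs) i) = (\<Sum>i<n. c i) + (\<Sum>i<n. load cs i)"
    by (simp add: load_def sum.distrib)
  then show ?case
    using Cons sum_edge_profile by simp
qed simp

lemma card_Union_matching:
  assumes "is_matching (sh_edges n r q \<sigma>) M" "finite M"
  shows "card (\<Union>M) = r * card M" and "\<Union>M \<subseteq> sh_vertices n q"
proof -
  have edges: "K \<subseteq> sh_vertices n q" "card K = r" if "K \<in> M" for K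
    using assms that by (auto simp: is_matching_def sh_edges_def)
  have "finite K" if "K \<in> M" for K
    using edges(1)[OF that] finite_subset by (auto simp: sh_vertices_def)
  then have "card (\<Union>M) = sum card M"
    using assms by (intro card_Union_disjoint) (auto simp: is_matching_def pairwise_def disjnt_def)
  then show "card (\<Union>M) = r * card M"
    using edges(2) by simp
  show "\<Union>M \<subseteq> sh_vertices n q"
    using edges(1) by blast
qed

lemma card_sh_vertices: "card (sh_vertices n q) = q * n"
  by (simp add: sh_vertices_def card_cartesian_product)

lemma card_matching_le:
  assumes "is_matching (sh_edges n r q \<sigma>) M" "finite M"
  shows "r * card M \<le> q * n"
proof -
  have "card (\<Union>M) \<le> card (sh_vertices n q)"
    using card_Union_matching(2)[OF assms] by (intro card_mono) (auto simp: sh_vertices_def)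
  then show ?thesis
    using card_Union_matching(1)[OF assms] by (simp add: card_sh_vertices)
qed

lemma stacked_edge_in_sh_edges:
  assumes profile: "edge_profile n \<sigma> c" and r: "sum_list \<sigma> = r"
    and fits: "\<forall>i<n. lo i + c i \<le> q"
  shows "Sigma {..<n} (\<lambda>i. {lo i..<lo i + c i}) \<in> sh_edges n r q \<sigma>"
proof -
  let ?K = "Sigma {..<n} (\<lambda>i. {lo i..<lo i + c i})"
  have card_class: "card (?K \<inter> sh_class q i) = c i" if "i < n" for i
  proof -
    have "?K \<inter> sh_class q i = {i} \<times> {lo i..<lo i + c i}"
      using that fits by (auto simp: sh_class_def)
    then show ?thesis
      by simp
  qed
  have filter_eq: "filter_mset (\<lambda>i. card (?K \<inter> sh_class q i) \<noteq> 0) (mset_set {..<n})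
      = filter_mset (\<lambda>i. c i \<noteq> 0) (mset_set {..<n})"
    by (rule filter_mset_cong) (auto simp: card_class)
  have "image_mset (\<lambda>i. card (?K \<inter> sh_class q i))
        (filter_mset (\<lambda>i. card (?K \<inter> sh_class q i) \<noteq> 0) (mset_set {..<n}))
      = image_mset c (filter_mset (\<lambda>i. c i \<noteq> 0) (mset_set {..<n}))"
    unfolding filter_eq by (rule image_mset_cong) (simp add: card_class)
  then have "image_mset (\<lambda>i. card (?K \<inter> sh_class q i))
        (filter_mset (\<lambda>i. card (?K \<inter> sh_class q i) \<noteq> 0) (mset_set {..<n})) = mset \<sigma>"
    using profile unfolding edge_profile_def by (rule trans)
  moreover have "card ?K = (\<Sum>i<n. card {lo i..<lo i + c i})"
    by (rule card_SigmaI) auto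
  then have "card ?K = r"
    using sum_edge_profile[OF profile] r by simp
  moreover have "?K \<subseteq> sh_vertices n q"
    using fits by (fastforce simp: sh_vertices_def)
  ultimately show ?thesis
    unfolding sh_edges_def by blast
qed

text \<open>The \<open>k\<close>-th edge is stacked on top of the first \<open>k\<close> ones inside every class.\<close>
lemma matching_of_edge_profiles:
  assumes profiles: "\<forall>c\<in>set cs. edge_profile n \<sigma> c" and load: "\<forall>i<n. load cs i \<le> q"
    and r: "sum_list \<sigma> = r" "0 < r"
  shows "\<exists>M. is_matching (sh_edges n r q \<sigma>) M \<and> finite M \<and> card M = length cs"
proof -
  define off where "off k i = (\<Sum>l<k. (cs ! l) i)" for k i
  define K where "K k = Sigma {..<n} (\<lambda>i. {off k i..<off k i + (cs ! k) i})" for k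
  have off_mono: "off k i \<le> off k' i" if "k \<le> k'" for k k' i
    unfolding off_def using that by (intro sum_mono2) auto
  have "off (Suc k) i \<le> q" if "k < length cs" "i < n" for k i
    using off_mono[of "Suc k" "length cs" i] load that
    by (simp add: off_def load_conv_sum_nth) (meson le_trans)
  then have K_edge: "K k \<in> sh_edges n r q \<sigma>" if "k < length cs" for k
    unfolding K_def using that profiles r(1) by (intro stacked_edge_in_sh_edges) (auto simp: off_def)
  have K_disjoint: "K k \<inter> K k' = {}" if "k < k'" for k k'
  proof -
    have "off k i + (cs ! k) i \<le> off k' i" for i
      using that off_mono[of "Suc k" k' i] by (simp add: off_def)
    then show ?thesis
      by (auto simp: K_def disjoint_iff) (meson le_trans not_le)
  qed
  have "K k \<noteq> {}" if "k < length cs" for k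
    using K_edge[OF that] \<open>0 < r\<close> by (auto simp: sh_edges_def)
  then have "inj_on K {..<length cs}"
    using K_disjoint by (intro inj_onI) (metis Int_absorb lessThan_iff linorder_neqE_nat)
  moreover have "is_matching (sh_edges n r q \<sigma>) (K ` {..<length cs})"
    unfolding is_matching_def
  proof (intro conjI ballI impI)
    show "K ` {..<length cs} \<subseteq> sh_edges n r q \<sigma>"
      using K_edge by auto
    fix e f assume "e \<in> K ` {..<length cs}" "f \<in> K ` {..<length cs}" "e \<noteq> f"
    then obtain k k' where "e = K k" "f = K k'" "k \<noteq> k'"
      by blast
    then show "e \<inter> f = {}"
      using K_disjoint[of k k'] K_disjoint[of k' k] by (cases "k < k'") auto
  qed
  ultimately show ?thesis
    by (intro exI[of _ "K ` {..<length cs}"]) (simp add: card_image)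
qed

lemma
  assumes "0 < r"
  shows matching_number_attained: "\<exists>M. is_matching (sh_edges n r q \<sigma>) M \<and> finite M \<and>
      card M = matching_number (sh_edges n r q \<sigma>)"
    and card_le_matching_number: "is_matching (sh_edges n r q \<sigma>) M \<Longrightarrow> finite M \<Longrightarrow>
      card M \<le> matching_number (sh_edges n r q \<sigma>)"
proof -
  define S where "S = {card M | M. is_matching (sh_edges n r q \<sigma>) M \<and> finite M}"
  have "S \<subseteq> {..q * n}"
  proof
    fix x assume "x \<in> S"
    then obtain M where "x = card M" "is_matching (sh_edges n r q \<sigma>) M" "finite M"
      unfolding S_def by blast
    then have "x = card M" "r * card M \<le> q * n"
      using card_matching_le by auto
    moreover have "card M \<le> r * card M"
      using \<open>0 < r\<close> by simp
    ultimately show "x \<in> {..q * n}"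
      unfolding atMost_iff by linarith
  qed
  then have "finite S"
    using finite_subset by blast
  moreover have "0 \<in> S"
    unfolding S_def is_matching_def by (intro CollectI exI[of _ "{}"]) simp
  ultimately have "Max S \<in> S" "\<forall>x\<in>S. x \<le> Max S"
    by (auto intro: Max_in)
  then show "\<exists>M. is_matching (sh_edges n r q \<sigma>) M \<and> finite M \<and>
      card M = matching_number (sh_edges n r q \<sigma>)"
    and "is_matching (sh_edges n r q \<sigma>) M \<Longrightarrow> finite M \<Longrightarrow>
      card M \<le> matching_number (sh_edges n r q \<sigma>)"
    unfolding matching_number_def S_def[symmetric] by (auto simp: S_def)
qed

lemma matching_number_le:
  assumes "0 < r"
  shows "r * matching_number (sh_edges n r q \<sigma>) \<le> q * n"
  using matching_number_attained[OF assms] card_matching_le by metis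

lemma matching_number_deficit_bound:
  assumes profiles: "\<forall>c\<in>set cs. edge_profile n \<sigma> c" and load: "\<forall>i<n. load cs i \<le> q"
    and r: "sum_list \<sigma> = r" "0 < r"
  shows "q * n \<le> r * matching_number (sh_edges n r q \<sigma>) + (\<Sum>i<n. q - load cs i)"
proof -
  obtain M where M: "is_matching (sh_edges n r q \<sigma>) M" "finite M" "card M = length cs"
    using matching_of_edge_profiles[OF profiles load r] by blast
  have "q * n = (\<Sum>i<n. load cs i + (q - load cs i))"
    using load by simp
  also have "\<dots> = r * length cs + (\<Sum>i<n. q - load cs i)"
    using sum_load[OF profiles] r by (simp add: sum.distrib)
  also have "r * length cs \<le> r * matching_number (sh_edges n r q \<sigma>)"
    using card_le_matching_number[OF \<open>0 < r\<close> M(1,2)] M(3) by simp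
  finally show ?thesis
    by simp
qed

lemma sum_lessThan_indicator_interval:
  fixes c :: nat
  assumes "k2 \<le> n"
  shows "(\<Sum>i<n. if k1 \<le> i \<and> i < k2 then c else 0) = (k2 - k1) * c"
proof -
  have "(\<Sum>i<n. if k1 \<le> i \<and> i < k2 then c else 0) = (\<Sum>i\<in>{k1..<k2}. c)"
    by (rule sum.mono_neutral_cong_right) (use assms in auto)
  then show ?thesis
    by simp
qed

lemma matching_number_interval_deficit:
  assumes profiles: "\<forall>c\<in>set cs. edge_profile n \<sigma> c"
    and load: "\<forall>i<n. load cs i = (if k1 \<le> i \<and> i < k2 then q - D else q)"
    and "D \<le> q" "k2 \<le> n" and r: "sum_list \<sigma> = r" "0 < r"
  shows "q * n \<le> r * matching_number (sh_edges n r q \<sigma>) + (k2 - k1) * D"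
proof -
  have "(\<Sum>i<n. q - load cs i) = (\<Sum>i<n. if k1 \<le> i \<and> i < k2 then D else 0)"
    using load \<open>D \<le> q\<close> by (intro sum.cong) auto
  also have "\<dots> = (k2 - k1) * D"
    using \<open>k2 \<le> n\<close> by (rule sum_lessThan_indicator_interval)
  finally have deficit: "(\<Sum>i<n. q - load cs i) = (k2 - k1) * D" .
  have "\<forall>i<n. load cs i \<le> q"
    using load by simp
  from matching_number_deficit_bound[OF profiles this r] deficit show ?thesis
    by simp
qed

lemma perfect_matching_of_edge_profiles:
  assumes profiles: "\<forall>c\<in>set cs. edge_profile n \<sigma> c" and load: "\<forall>i<n. load cs i = q"
    and r: "sum_list \<sigma> = r" "0 < r"
  shows "\<exists>M. is_perfect_matching (sh_vertices n q) (sh_edges n r q \<sigma>) M"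
    and "r * matching_number (sh_edges n r q \<sigma>) = q * n"
proof -
  obtain M where M: "is_matching (sh_edges n r q \<sigma>) M" "finite M" "card M = length cs"
    using matching_of_edge_profiles[OF profiles] load r by fastforce
  have "r * length cs = q * n"
    using sum_load[OF profiles] load r by (simp add: mult.commute)
  then have "card (\<Union>M) = card (sh_vertices n q)"
    using card_Union_matching(1)[OF M(1,2)] M(3) by (simp add: card_sh_vertices)
  then have "\<Union>M = sh_vertices n q"
    using card_Union_matching(2)[OF M(1,2)] by (intro card_subset_eq) (auto simp: sh_vertices_def)
  then show "\<exists>M. is_perfect_matching (sh_vertices n q) (sh_edges n r q \<sigma>) M"
    using M(1) by (auto simp: is_perfect_matching_def)
  show "r * matching_number (sh_edges n r q \<sigma>) = q * n"
    using matching_number_deficit_bound[OF profiles _ r, of q] load matching_number_le[OF r(2)]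
    by (simp add: le_antisym)
qed

section \<open>Rotating the parts through lists of classes\<close>

definition placement_profile :: "nat list \<Rightarrow> (nat \<Rightarrow> nat) \<Rightarrow> nat \<Rightarrow> nat" where
  "placement_profile \<sigma> p i = (\<Sum>j<length \<sigma>. if p j = i then \<sigma> ! j else 0)"

lemma edge_profile_placement_profile:
  assumes inj: "inj_on p {..<length \<sigma>}" and range: "p ` {..<length \<sigma>} \<subseteq> {..<n}"
    and pos: "\<forall>x\<in>set \<sigma>. 0 < x"
  shows "edge_profile n \<sigma> (placement_profile \<sigma> p)"
proof -
  let ?c = "placement_profile \<sigma> p" and ?s = "length \<sigma>"
  have c_placed: "?c (p j) = \<sigma> ! j" if "j < ?s" for j
  proof -
    have "?c (p j) = (\<Sum>j'<?s. if j' = j then \<sigma> ! j' else 0)"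
      unfolding placement_profile_def
      by (rule sum.cong) (use inj that in \<open>auto dest: inj_onD\<close>)
    then show ?thesis
      using that by simp
  qed
  have "{i\<in>{..<n}. ?c i \<noteq> 0} = p ` {..<?s}"
  proof (intro equalityI subsetI)
    fix i assume "i \<in> {i\<in>{..<n}. ?c i \<noteq> 0}"
    then show "i \<in> p ` {..<?s}"
      by (auto simp: placement_profile_def split: if_splits)
  next
    fix i assume "i \<in> p ` {..<?s}"
    then show "i \<in> {i\<in>{..<n}. ?c i \<noteq> 0}"
      using range c_placed pos by auto
  qed
  then have "image_mset ?c (filter_mset (\<lambda>i. ?c i \<noteq> 0) (mset_set {..<n}))
      = image_mset ?c (image_mset p (mset_set {..<?s}))"
    by (simp add: image_mset_mset_set[OF inj])
  also have "\<dots> = image_mset (nth \<sigma>) (mset_set {..<?s})"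
    by (simp add: image_mset.compositionality comp_def) (rule image_mset_cong, simp add: c_placed)
  also have "\<dots> = mset \<sigma>"
    by (metis map_nth mset_map mset_set_upto_eq_mset_upto)
  finally show ?thesis
    unfolding edge_profile_def .
qed

lemma bij_betw_shift_mod:
  fixes N c :: nat
  assumes "0 < N"
  shows "bij_betw (\<lambda>e. (c + e) mod N) {..<N} {..<N}"
proof -
  have "inj_on (\<lambda>e. (c + e) mod N) {..<N}"
    by (intro inj_onI) (simp add: cong_def [symmetric] cong_add_lcancel_nat cong_less_imp_eq_nat)
  moreover have "(\<lambda>e. (c + e) mod N) ` {..<N} \<subseteq> {..<N}"
    using assms by auto
  ultimately show ?thesis
    by (simp add: bij_betw_def endo_inj_surj)
qed

lemma sum_periodic_mod:
  fixes N c k :: nat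
  assumes "0 < N"
  shows "(\<Sum>e<N * k. f ((c + e) mod N)) = k * (\<Sum>x<N. f x)"
proof (induction k)
  case (Suc k)
  have "(\<Sum>e<N * Suc k. f ((c + e) mod N))
      = (\<Sum>e<N * k. f ((c + e) mod N)) + (\<Sum>e\<in>{N * k..<N * k + N}. f ((c + e) mod N))"
    using sum.atLeastLessThan_concat[of 0 "N * k" "N * k + N" "\<lambda>e. f ((c + e) mod N)"]
    by (simp add: atLeast0LessThan add.commute)
  also have "(\<Sum>e\<in>{N * k..<N * k + N}. f ((c + e) mod N)) = (\<Sum>e<N. f ((c + (N * k + e)) mod N))"
    using sum.shift_bounds_nat_ivl[of "\<lambda>e. f ((c + e) mod N)" 0 "N * k" N]
    by (simp add: atLeast0LessThan add.commute)
  also have "(\<Sum>e<N. f ((c + (N * k + e)) mod N)) = (\<Sum>e<N. f ((c + e) mod N))"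
    by (simp add: add.left_commute[of c])
  also have "\<dots> = (\<Sum>x<N. f x)"
    using sum.reindex_bij_betw[OF bij_betw_shift_mod[OF assms]] .
  finally show ?case
    using Suc by simp
qed simp

lemma sum_residue_indicator:
  fixes N m u c x :: nat
  assumes "0 < N" "N dvd m" "u < N"
  shows "(\<Sum>e<m. if (c + e) mod N = u then x else 0) = m div N * x"
proof -
  obtain k where "m = N * k"
    using assms(2) by blast
  then show ?thesis
    using sum_periodic_mod[OF assms(1), of "\<lambda>y. if y = u then x else 0" c k] assms by simp
qed

definition enumeration :: "nat set \<Rightarrow> nat \<Rightarrow> nat" where
  "enumeration J = (SOME h. bij_betw h J {..<card J})"

lemma bij_betw_enumeration:
  assumes "finite J"
  shows "bij_betw (enumeration J) J {..<card J}"
  unfolding enumeration_def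
  using someI_ex[OF ex_bij_betw_finite_nat[OF assms]] by (simp add: atLeast0LessThan)

lemma enumeration_shift_mod_inj:
  assumes "finite J" "card J \<le> N" "j \<in> J" "j' \<in> J"
    and "(enumeration J j + e) mod N = (enumeration J j' + e) mod N"
  shows "j = j'"
proof -
  have "enumeration J j < N" "enumeration J j' < N"
    using bij_betwE[OF bij_betw_enumeration] assms(1-4) by (meson lessThan_iff less_le_trans)+
  moreover have "[enumeration J j = enumeration J j'] (mod N)"
    using assms(5) by (simp add: cong_def [symmetric] cong_add_rcancel_nat)
  ultimately have "enumeration J j = enumeration J j'"
    using cong_less_imp_eq_nat by blast
  then show ?thesis
    using bij_betw_imp_inj_on[OF bij_betw_enumeration] assms(1,3,4) by (blast dest: inj_onD)
qed

definition rotation_placement ::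
    "nat set \<Rightarrow> nat set \<Rightarrow> nat list \<Rightarrow> nat \<Rightarrow> nat \<Rightarrow> nat \<Rightarrow> nat \<Rightarrow> nat" where
  "rotation_placement J J' zs N1 N2 e j =
     (if j \<in> J then zs ! ((enumeration J j + e) mod N1)
      else zs ! (N1 + (enumeration J' j + e) mod N2))"

definition rotation_profiles ::
    "nat list \<Rightarrow> nat set \<Rightarrow> nat set \<Rightarrow> nat list \<Rightarrow> nat \<Rightarrow> nat \<Rightarrow> nat \<Rightarrow> (nat \<Rightarrow> nat) list" where
  "rotation_profiles \<sigma> J J' zs N1 N2 m =
     map (\<lambda>e. placement_profile \<sigma> (rotation_placement J J' zs N1 N2 e)) [0..<m]"

locale two_group_rotation =
  fixes \<sigma> :: "nat list" and J J' :: "nat set" and zs :: "nat list" and N1 N2 :: nat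
  assumes distinct_zs: "distinct zs" and length_zs: "length zs = N1 + N2"
    and groups_disjoint: "J \<inter> J' = {}" and groups_cover: "J \<union> J' = {..<length \<sigma>}"
    and card_J: "card J \<le> N1" and card_J': "card J' \<le> N2" and N1_pos: "0 < N1"
begin

lemma finite_J: "finite J" and finite_J': "finite J'"
  using groups_cover by (metis finite_Un finite_lessThan)+

lemma N2_pos: "j \<in> J' \<Longrightarrow> 0 < N2"
  using card_J' finite_J' by (metis card_gt_0_iff empty_iff gr0I le_zero_eq)

lemma index_J: "(enumeration J j + e) mod N1 < length zs"
  using N1_pos length_zs by (simp add: trans_less_add1)

lemma index_J': "j \<in> J' \<Longrightarrow> N1 + (enumeration J' j + e) mod N2 < length zs"
  using N2_pos length_zs by simp

lemma nth_zs_eq_iff: "x < length zs \<Longrightarrow> y < length zs \<Longrightarrow> zs ! x = zs ! y \<longleftrightarrow> x = y"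
  using distinct_zs by (simp add: nth_eq_iff_index_eq)

lemma rotation_placement_J:
  "j \<in> J \<Longrightarrow> rotation_placement J J' zs N1 N2 e j = zs ! ((enumeration J j + e) mod N1)"
  by (simp add: rotation_placement_def)

lemma rotation_placement_J':
  "j \<in> J' \<Longrightarrow> rotation_placement J J' zs N1 N2 e j = zs ! (N1 + (enumeration J' j + e) mod N2)"
  using groups_disjoint by (auto simp: rotation_placement_def)

lemma inj_on_rotation_placement: "inj_on (rotation_placement J J' zs N1 N2 e) {..<length \<sigma>}"
proof (rule inj_onI)
  fix j j' assume "j \<in> {..<length \<sigma>}" "j' \<in> {..<length \<sigma>}"
    and eq: "rotation_placement J J' zs N1 N2 e j = rotation_placement J J' zs N1 N2 e j'"
  then consider "j \<in> J" "j' \<in> J" | "j \<in> J" "j' \<in> J'" | "j \<in> J'" "j' \<in> J" | "j \<in> J'" "j' \<in> J'"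
    using groups_cover by blast
  then show "j = j'"
  proof cases
    case 1
    then show ?thesis
      using eq enumeration_shift_mod_inj[OF finite_J card_J]
      by (simp add: rotation_placement_J nth_zs_eq_iff index_J)
  next
    case 2
    then have "(enumeration J j + e) mod N1 = N1 + (enumeration J' j' + e) mod N2"
      using eq by (simp add: rotation_placement_J rotation_placement_J' nth_zs_eq_iff index_J index_J')
    then show ?thesis
      using N1_pos by (metis mod_less_divisor not_add_less1)
  next
    case 3
    then have "(enumeration J j' + e) mod N1 = N1 + (enumeration J' j + e) mod N2"
      using eq by (simp add: rotation_placement_J rotation_placement_J' nth_zs_eq_iff index_J index_J')
    then show ?thesis
      using N1_pos by (metis mod_less_divisor not_add_less1)
  next
    case 4
    then show ?thesis
      using eq enumeration_shift_mod_inj[OF finite_J' card_J']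
      by (simp add: rotation_placement_J' nth_zs_eq_iff index_J')
  qed
qed

lemma rotation_placement_in_set:
  assumes "j < length \<sigma>"
  shows "rotation_placement J J' zs N1 N2 e j \<in> set zs"
proof -
  have "j \<in> J \<or> j \<in> J'"
    using assms groups_cover by auto
  then show ?thesis
    using index_J index_J' by (auto simp: rotation_placement_J rotation_placement_J')
qed

lemma edge_profiles_rotation_profiles:
  assumes "set zs \<subseteq> {..<n}" "\<forall>x\<in>set \<sigma>. 0 < x"
  shows "\<forall>c\<in>set (rotation_profiles \<sigma> J J' zs N1 N2 m). edge_profile n \<sigma> c"
  using assms rotation_placement_in_set
  by (auto simp: rotation_profiles_def intro!: edge_profile_placement_profile inj_on_rotation_placement)

lemma load_rotation_profiles:
  "load (rotation_profiles \<sigma> J J' zs N1 N2 m) i =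
     (\<Sum>j\<in>J. \<Sum>e<m. if rotation_placement J J' zs N1 N2 e j = i then \<sigma> ! j else 0) +
     (\<Sum>j\<in>J'. \<Sum>e<m. if rotation_placement J J' zs N1 N2 e j = i then \<sigma> ! j else 0)"
proof -
  have "load (rotation_profiles \<sigma> J J' zs N1 N2 m) i =
      (\<Sum>j<length \<sigma>. \<Sum>e<m. if rotation_placement J J' zs N1 N2 e j = i then \<sigma> ! j else 0)"
    unfolding load_def rotation_profiles_def placement_profile_def
    by (simp add: interv_sum_list_conv_sum_set_nat atLeast0LessThan comp_def sum.swap[of _ "{..<m}"])
  then show ?thesis
    using sum.union_disjoint[OF finite_J finite_J' groups_disjoint] groups_cover by simp
qed

lemma load_first_group:
  assumes "u < N1" "N1 dvd m"
  shows "load (rotation_profiles \<sigma> J J' zs N1 N2 m) (zs ! u) = m div N1 * (\<Sum>j\<in>J. \<sigma> ! j)"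
proof -
  have u: "u < length zs"
    using assms length_zs by simp
  have "(\<Sum>e<m. if rotation_placement J J' zs N1 N2 e j = zs ! u then \<sigma> ! j else 0) = m div N1 * \<sigma> ! j"
    if "j \<in> J" for j
    using that sum_residue_indicator[OF N1_pos assms(2,1)]
    by (simp add: rotation_placement_J nth_zs_eq_iff[OF index_J u])
  moreover have "rotation_placement J J' zs N1 N2 e j \<noteq> zs ! u" if "j \<in> J'" for j e
    using that assms(1) by (simp add: rotation_placement_J' nth_zs_eq_iff[OF index_J' u])
  ultimately show ?thesis
    by (simp add: load_rotation_profiles sum_distrib_left)
qed

lemma load_second_group:
  assumes "u < N2" "N2 dvd m"
  shows "load (rotation_profiles \<sigma> J J' zs N1 N2 m) (zs ! (N1 + u)) = m div N2 * (\<Sum>j\<in>J'. \<sigma> ! j)"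
proof -
  have u: "N1 + u < length zs"
    using assms length_zs by simp
  have "(\<Sum>e<m. if rotation_placement J J' zs N1 N2 e j = zs ! (N1 + u) then \<sigma> ! j else 0)
      = m div N2 * \<sigma> ! j" if "j \<in> J'" for j
    using that sum_residue_indicator[OF N2_pos[OF that] assms(2,1)]
    by (simp add: rotation_placement_J' nth_zs_eq_iff[OF index_J' u])
  moreover have "rotation_placement J J' zs N1 N2 e j \<noteq> zs ! (N1 + u)" if "j \<in> J" for j e
    using that N1_pos
    by (simp add: rotation_placement_J nth_zs_eq_iff[OF index_J u]) (metis mod_less_divisor not_add_less1)
  ultimately show ?thesis
    by (simp add: load_rotation_profiles sum_distrib_left)
qed

lemma load_outside:
  assumes "i \<notin> set zs"
  shows "load (rotation_profiles \<sigma> J J' zs N1 N2 m) i = 0"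
proof -
  have "rotation_placement J J' zs N1 N2 e j \<noteq> i" if "j \<in> J \<union> J'" for j e
    using that assms groups_cover rotation_placement_in_set by blast
  then show ?thesis
    by (simp add: load_rotation_profiles)
qed

end

text \<open>The second group is empty, so the junk branch of \<open>rotation_placement\<close> taking \<open>mod 0\<close> is
  never reached.\<close>
definition cyclic_profiles :: "nat list \<Rightarrow> nat list \<Rightarrow> (nat \<Rightarrow> nat) list" where
  "cyclic_profiles \<sigma> zs = rotation_profiles \<sigma> {..<length \<sigma>} {} zs (length zs) 0 (length zs)"

definition block_profiles ::
    "nat list \<Rightarrow> nat set \<Rightarrow> nat set \<Rightarrow> nat \<Rightarrow> nat \<Rightarrow> nat list \<Rightarrow> nat \<Rightarrow> (nat \<Rightarrow> nat) list" where
  "block_profiles \<sigma> A B a b zs k = rotation_profiles \<sigma> A B zs (a * k) (b * k) (k * a * b)"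

lemma two_group_rotation_cyclic:
  assumes "distinct zs" "length \<sigma> \<le> length zs" "\<sigma> \<noteq> []"
  shows "two_group_rotation \<sigma> {..<length \<sigma>} {} zs (length zs) 0"
  using assms by unfold_locales auto

lemma load_cyclic_profiles:
  assumes "distinct zs" "length \<sigma> \<le> length zs" "\<sigma> \<noteq> []"
  shows "load (cyclic_profiles \<sigma> zs) i = (if i \<in> set zs then sum_list \<sigma> else 0)"
proof -
  interpret two_group_rotation \<sigma> "{..<length \<sigma>}" "{}" zs "length zs" 0
    using assms by (rule two_group_rotation_cyclic)
  show ?thesis
  proof (cases "i \<in> set zs")
    case True
    then obtain u where "u < length zs" "i = zs ! u"
      by (metis in_set_conv_nth)
    then show ?thesis
      using load_first_group[of u "length zs"] N1_pos
      by (simp add: cyclic_profiles_def sum_list_sum_nth atLeast0LessThan)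
  qed (simp add: cyclic_profiles_def load_outside)
qed

lemma edge_profiles_cyclic_profiles:
  assumes "distinct zs" "length \<sigma> \<le> length zs" "\<sigma> \<noteq> []"
    and "set zs \<subseteq> {..<n}" "\<forall>x\<in>set \<sigma>. 0 < x"
  shows "\<forall>c\<in>set (cyclic_profiles \<sigma> zs). edge_profile n \<sigma> c"
proof -
  interpret two_group_rotation \<sigma> "{..<length \<sigma>}" "{}" zs "length zs" 0
    using assms(1-3) by (rule two_group_rotation_cyclic)
  show ?thesis
    unfolding cyclic_profiles_def using assms(4,5) by (rule edge_profiles_rotation_profiles)
qed

section \<open>Filling the classes\<close>

lemma card_le_sum_parts:
  assumes "A \<subseteq> {..<length \<sigma>}" "\<forall>x\<in>set \<sigma>. 0 < x"
  shows "card A \<le> (\<Sum>j\<in>A. \<sigma> ! j)"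
proof -
  have "(\<Sum>j\<in>A. 1) \<le> (\<Sum>j\<in>A. \<sigma> ! j)"
    using assms by (intro sum_mono) (auto simp: Suc_le_eq)
  then show ?thesis
    by simp
qed

lemma mult_le_if_cong_and_frobenius_bound:
  fixes L Y q r :: nat
  assumes "Y < r" "[L * Y = q] (mod r)" "(L - 1) * (r - 1) \<le> q"
  shows "L * Y \<le> q"
proof (rule ccontr)
  assume less: "\<not> L * Y \<le> q"
  then have "r dvd L * Y - q"
    using assms(2) cong_altdef_nat[of q "L * Y" r] by (simp add: cong_sym_eq)
  then have "r \<le> L * Y - q"
    using less by (simp add: dvd_imp_le)
  then have "q + r \<le> L * Y"
    using less by linarith
  moreover have "L * Y \<le> L * (r - 1)"
    using assms(1) by (intro mult_le_mono2) simp
  ultimately show False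
    using assms(1,3) by (cases L; cases r) (auto simp: algebra_simps)
qed

lemma cong_rotation_count:
  fixes L Y q r :: nat
  assumes "L * Y \<le> q" "[L * Y = q] (mod r)"
  shows "(q - L * Y) div r * r + L * Y = q"
proof -
  have "r dvd q - L * Y"
    using assms cong_altdef_nat[OF assms(1)] by (simp add: cong_sym_eq)
  then show ?thesis
    using assms(1) by simp
qed

locale split_partition =
  fixes \<sigma> :: "nat list" and A B :: "nat set" and r a b L :: nat
  assumes parts_pos: "\<forall>x\<in>set \<sigma>. 0 < x" and sum_parts: "sum_list \<sigma> = r" and nonempty: "\<sigma> \<noteq> []"
    and split_disjoint: "A \<inter> B = {}" and split_cover: "A \<union> B = {..<length \<sigma>}"
    and a_eq: "a = (\<Sum>j\<in>A. \<sigma> ! j)" and b_eq: "b = (\<Sum>j\<in>B. \<sigma> ! j)" and L_eq: "L = lcm a b"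
    and gcd_eq_1: "gcd a b = 1" "gcd a r = 1" "gcd b r = 1"
begin

lemma length_le_r: "length \<sigma> \<le> r"
  using card_le_sum_parts[of "{..<length \<sigma>}" \<sigma>] parts_pos sum_parts
  by (simp add: sum_list_sum_nth atLeast0LessThan)

lemma r_pos: "0 < r"
  using length_le_r nonempty by (metis le_zero_eq length_0_conv not_gr_zero)

lemma a_plus_b: "a + b = r"
  using sum.union_disjoint[of A B "nth \<sigma>"] split_disjoint split_cover sum_parts
  by (metis a_eq b_eq atLeast0LessThan finite_Un finite_lessThan sum_list_sum_nth)

lemma
  assumes "2 \<le> r"
  shows a_pos: "0 < a" and b_pos: "0 < b" and L_eq_mult: "L = a * b"
proof -
  show "0 < a" "0 < b"
    using assms gcd_eq_1(2,3) by (auto intro!: gr0I)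
  show "L = a * b"
    using L_eq gcd_eq_1(1) lcm_coprime[of a b] by (simp add: coprime_iff_gcd_eq_1)
qed

lemma exists_block_count: "\<exists>Y<r. [L * Y = q] (mod r)"
proof (cases "r = 1")
  case False
  have "coprime a r" "coprime b r"
    using gcd_eq_1(2,3) by (simp_all add: coprime_iff_gcd_eq_1)
  then have "coprime L r"
    using False r_pos L_eq_mult by simp
  then have "gcd L r dvd q"
    by simp
  then obtain x where "[L * x = q] (mod r)"
    using cong_solve_dvd_nat by blast
  then have "[L * (x mod r) = q] (mod r)"
    by (metis cong_def mod_mult_right_eq)
  then show ?thesis
    using r_pos by (intro exI[of _ "x mod r"]) simp
qed (simp add: cong_def)

lemma exists_cyclic_load:
  assumes "distinct zs" "length \<sigma> \<le> length zs" "set zs \<subseteq> {..<n}"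
  shows "\<exists>cs. (\<forall>c\<in>set cs. edge_profile n \<sigma> c) \<and> (\<forall>i. load cs i = (if i \<in> set zs then X * r else 0))"
  using load_cyclic_profiles[OF assms(1,2) nonempty]
    edge_profiles_cyclic_profiles[OF assms(1,2) nonempty assms(3) parts_pos] sum_parts
  by (intro exI[of _ "concat (replicate X (cyclic_profiles \<sigma> zs))"]) auto

lemma two_group_rotation_block:
  assumes "2 \<le> r" "distinct zs" "length zs = r * k" "0 < k"
  shows "two_group_rotation \<sigma> A B zs (a * k) (b * k)"
proof
  have "card A \<le> a" "card B \<le> b"
    using card_le_sum_parts[of A \<sigma>] card_le_sum_parts[of B \<sigma>] split_cover parts_pos
    by (auto simp: a_eq b_eq)
  moreover have "a \<le> a * k" "b \<le> b * k"
    using assms(4) by simp_all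
  ultimately show "card A \<le> a * k" "card B \<le> b * k"
    by linarith+
  show "length zs = a * k + b * k"
    using assms(3) by (simp add: a_plus_b [symmetric] algebra_simps)
  show "0 < a * k"
    using a_pos[OF assms(1)] assms(4) by simp
qed (use assms split_disjoint split_cover in auto)

lemma load_block_profiles:
  assumes "2 \<le> r" "distinct zs" "length zs = r * k" "0 < k"
  shows "load (block_profiles \<sigma> A B a b zs k) i = (if i \<in> set zs then L else 0)"
proof -
  interpret two_group_rotation \<sigma> A B zs "a * k" "b * k"
    using assms by (rule two_group_rotation_block)
  have a: "0 < a" and b: "0 < b" and L: "L = a * b"
    using a_pos b_pos L_eq_mult assms(1) by auto
  show ?thesis
  proof (cases "i \<in> set zs")
    case True
    then obtain x where x: "x < length zs" "i = zs ! x"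
      by (metis in_set_conv_nth)
    show ?thesis
    proof (cases "x < a * k")
      case True
      then show ?thesis
        using load_first_group[OF True, of "k * a * b"] x a L assms(4)
        by (simp add: block_profiles_def a_eq [symmetric] ac_simps)
    next
      case False
      then obtain u where u: "x = a * k + u" "u < b * k"
        using x(1) length_zs by (metis add_less_cancel_left le_add_diff_inverse not_less)
      then show ?thesis
        using load_second_group[OF u(2), of "k * a * b"] x b L assms(4)
        by (simp add: block_profiles_def b_eq [symmetric] ac_simps)
    qed
  qed (simp add: block_profiles_def load_outside)
qed

lemma exists_block_load:
  assumes "Y < r" "distinct zs" "length zs = r * k" "set zs \<subseteq> {..<n}"
  shows "\<exists>cs. (\<forall>c\<in>set cs. edge_profile n \<sigma> c) \<and> (\<forall>i. load cs i = (if i \<in> set zs then L * Y else 0))"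
proof (cases "Y = 0 \<or> k = 0")
  case True
  then show ?thesis
    using assms(3) by (intro exI[of _ "[]"]) auto
next
  case False
  then have r: "2 \<le> r" and k: "0 < k"
    using assms(1) by auto
  interpret two_group_rotation \<sigma> A B zs "a * k" "b * k"
    using r assms(2,3) k by (rule two_group_rotation_block)
  show ?thesis
    using load_block_profiles[OF r assms(2,3) k] edge_profiles_rotation_profiles[OF assms(4) parts_pos]
    by (intro exI[of _ "concat (replicate Y (block_profiles \<sigma> A B a b zs k))"])
      (auto simp: block_profiles_def mult.commute)
qed

lemma exists_profiles_one_block_system:
  assumes "length \<sigma> \<le> n" "Y < r" "L * Y \<le> q" "[L * Y = q] (mod r)"
  shows "\<exists>cs. (\<forall>c\<in>set cs. edge_profile n \<sigma> c) \<and>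
    (\<forall>i<n. load cs i = (if r * (n div r) \<le> i \<and> i < n then q - L * Y else q))"
proof -
  define X where "X = (q - L * Y) div r"
  have X: "q = X * r + L * Y"
    unfolding X_def using cong_rotation_count[OF assms(3,4)] by simp
  define m where "m = n div r"
  have "r * m \<le> n"
    by (simp add: m_def)
  obtain cs1 where cs1: "\<forall>c\<in>set cs1. edge_profile n \<sigma> c" "\<forall>i. load cs1 i = (if i < n then X * r else 0)"
    using exists_cyclic_load[of "[0..<n]" n X] assms(1) by (auto simp: atLeast0LessThan)
  obtain cs2 where cs2: "\<forall>c\<in>set cs2. edge_profile n \<sigma> c"
    "\<forall>i. load cs2 i = (if i < r * m then L * Y else 0)"
    using exists_block_load[OF assms(2), of "[0..<r * m]" m n] \<open>r * m \<le> n\<close> by (auto simp: atLeast0LessThan)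
  show ?thesis
    using cs1 cs2 unfolding X m_def [symmetric] by (intro exI[of _ "cs1 @ cs2"]) auto
qed

text \<open>When \<open>r\<close> does not divide \<open>n\<close>, a second block system on the last \<open>r\<close> classes covers the
  \<open>n mod r\<close> classes missed by the first; the cyclic rotations are withdrawn from the at most
  \<open>r - 1\<close> classes where the two systems overlap.\<close>
lemma exists_profiles_two_block_systems:
  assumes "length \<sigma> + r \<le> n" "\<not> r dvd n" "Y < r" "2 * (L * Y) \<le> q" "[L * Y = q] (mod r)"
  shows "\<exists>cs. (\<forall>c\<in>set cs. edge_profile n \<sigma> c) \<and>
    (\<forall>i<n. load cs i = (if n - r \<le> i \<and> i < r * (n div r) then q - (q - 2 * (L * Y)) mod r else q))"
proof -
  define X where "X = (q - L * Y) div r"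
  have X: "X * r + L * Y = q"
    unfolding X_def using cong_rotation_count[of L Y q r] assms(4,5) by simp
  define X0 where "X0 = (q - 2 * (L * Y)) div r"
  define D where "D = (q - 2 * (L * Y)) mod r"
  have X0: "X0 * r + D = q - 2 * (L * Y)"
    by (simp add: X0_def D_def)
  have "X0 * r \<le> X * r"
    using X X0 assms(4) by linarith
  define m where "m = n div r"
  have "r * m + n mod r = n" "n mod r < r"
    using r_pos by (simp_all add: m_def)
  then have n: "n - r \<le> r * m" "r * m \<le> n" "r \<le> n"
    using assms(1) by linarith+
  define zs where "zs = [0..<n - r] @ [r * m..<n]"
  have zs: "distinct zs" "length \<sigma> \<le> length zs" "set zs \<subseteq> {..<n}"
    using n assms(1) by (auto simp: zs_def)
  obtain cs1 where cs1: "\<forall>c\<in>set cs1. edge_profile n \<sigma> c" "\<forall>i. load cs1 i = (if i < n then X0 * r else 0)"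
    using exists_cyclic_load[of "[0..<n]" n X0] assms(1) by (auto simp: atLeast0LessThan)
  obtain cs2 where cs2: "\<forall>c\<in>set cs2. edge_profile n \<sigma> c"
    "\<forall>i. load cs2 i = (if i < n - r \<or> r * m \<le> i \<and> i < n then (X - X0) * r else 0)"
    using exists_cyclic_load[OF zs, of "X - X0"] by (auto simp: zs_def)
  obtain cs3 where cs3: "\<forall>c\<in>set cs3. edge_profile n \<sigma> c"
    "\<forall>i. load cs3 i = (if i < r * m then L * Y else 0)"
    using exists_block_load[OF assms(3), of "[0..<r * m]" m n] n by (auto simp: atLeast0LessThan)
  obtain cs4 where cs4: "\<forall>c\<in>set cs4. edge_profile n \<sigma> c"
    "\<forall>i. load cs4 i = (if n - r \<le> i \<and> i < n then L * Y else 0)"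
    using exists_block_load[OF assms(3), of "[n - r..<n]" 1 n] n by (auto simp: subset_eq)
  have "load (cs1 @ cs2 @ cs3 @ cs4) i = (if n - r \<le> i \<and> i < r * m then q - D else q)"
    if "i < n" for i
    using cs1(2) cs2(2) cs3(2) cs4(2) X X0 \<open>X0 * r \<le> X * r\<close> n that assms(4)
    by (auto simp: diff_mult_distrib)
  then show ?thesis
    using cs1(1) cs2(1) cs3(1) cs4(1) unfolding m_def D_def
    by (intro exI[of _ "cs1 @ cs2 @ cs3 @ cs4"]) auto
qed

lemma perfect_matching_if_dvd_q:
  assumes "r dvd q" "length \<sigma> \<le> n"
  shows "(\<exists>M. is_perfect_matching (sh_vertices n q) (sh_edges n r q \<sigma>) M) \<and>
    r * matching_number (sh_edges n r q \<sigma>) = q * n"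
proof -
  obtain cs where "\<forall>c\<in>set cs. edge_profile n \<sigma> c" "\<forall>i<n. load cs i = q"
    using exists_cyclic_load[of "[0..<n]" n "q div r"] assms by (auto simp: atLeast0LessThan)
  then show ?thesis
    using perfect_matching_of_edge_profiles sum_parts r_pos by blast
qed

lemma perfect_matching_if_dvd_n_and_cong:
  assumes "r dvd n" "Y < r" "L * Y \<le> q" "[L * Y = q] (mod r)"
  shows "(\<exists>M. is_perfect_matching (sh_vertices n q) (sh_edges n r q \<sigma>) M) \<and>
    r * matching_number (sh_edges n r q \<sigma>) = q * n"
proof (cases "n = 0")
  case True
  then show ?thesis
    using perfect_matching_of_edge_profiles[of "[]" n \<sigma> q r] sum_parts r_pos by simp
next
  case False
  then have "r \<le> n"
    using assms(1) by (simp add: dvd_imp_le)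
  then have "length \<sigma> \<le> n"
    using length_le_r by linarith
  moreover have "r * (n div r) = n"
    using assms(1) by simp
  ultimately obtain cs where "\<forall>c\<in>set cs. edge_profile n \<sigma> c" "\<forall>i<n. load cs i = q"
    using exists_profiles_one_block_system[OF _ assms(2-4)] by fastforce
  then show ?thesis
    using perfect_matching_of_edge_profiles sum_parts r_pos by blast
qed

lemma perfect_matching_if_dvd_n:
  assumes "r dvd n" "(L - 1) * (r - 1) \<le> q"
  shows "(\<exists>M. is_perfect_matching (sh_vertices n q) (sh_edges n r q \<sigma>) M) \<and>
    r * matching_number (sh_edges n r q \<sigma>) = q * n"
proof -
  obtain Y where "Y < r" "[L * Y = q] (mod r)"
    using exists_block_count by blast
  then show ?thesis
    using perfect_matching_if_dvd_n_and_cong mult_le_if_cong_and_frobenius_bound assms by blast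
qed

lemma matching_number_deficit_le_L:
  assumes "L * (r - 1) \<le> q" "length \<sigma> \<le> n"
  shows "q * n \<le> r * matching_number (sh_edges n r q \<sigma>) + L * (r - 1)^2"
proof -
  obtain Y where Y: "Y < r" "[L * Y = q] (mod r)"
    using exists_block_count by blast
  have LY: "L * Y \<le> L * (r - 1)"
    using Y(1) by (intro mult_le_mono2) simp
  then have "L * Y \<le> q"
    using assms(1) by linarith
  then obtain cs where cs: "\<forall>c\<in>set cs. edge_profile n \<sigma> c"
    "\<forall>i<n. load cs i = (if r * (n div r) \<le> i \<and> i < n then q - L * Y else q)"
    using exists_profiles_one_block_system[OF assms(2) Y(1) _ Y(2)] by blast
  have "(n - r * (n div r)) * (L * Y) \<le> (r - 1) * (L * (r - 1))"
  proof (rule mult_le_mono)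
    have "n mod r < r"
      using r_pos by simp
    then show "n - r * (n div r) \<le> r - 1"
      unfolding minus_mult_div_eq_mod by linarith
  qed (rule LY)
  moreover have "(r - 1) * (L * (r - 1)) = L * (r - 1)^2"
    by (simp add: power2_eq_square)
  ultimately show ?thesis
    using matching_number_interval_deficit[OF cs \<open>L * Y \<le> q\<close> order.refl sum_parts r_pos] by linarith
qed

lemma matching_number_deficit_le_square:
  assumes "L * (r^2 - 1) \<le> q" "length \<sigma> + r \<le> n"
  shows "q * n \<le> r * matching_number (sh_edges n r q \<sigma>) + (r - 1)^2"
proof -
  obtain Y where Y: "Y < r" "[L * Y = q] (mod r)"
    using exists_block_count by blast
  have "2 * Y \<le> r^2 - 1"
    using Y(1) by (cases r) (auto simp: power2_eq_square)
  then have "2 * (L * Y) \<le> L * (r^2 - 1)"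
    using mult_le_mono2[of "2 * Y" "r^2 - 1" L] by (simp add: ac_simps)
  then have LY: "2 * (L * Y) \<le> q"
    using assms(1) by linarith
  show ?thesis
  proof (cases "r dvd n")
    case True
    then show ?thesis
      using perfect_matching_if_dvd_n_and_cong[OF True Y(1) _ Y(2)] LY by simp
  next
    case False
    define D where "D = (q - 2 * (L * Y)) mod r"
    obtain cs where cs: "\<forall>c\<in>set cs. edge_profile n \<sigma> c"
      "\<forall>i<n. load cs i = (if n - r \<le> i \<and> i < r * (n div r) then q - D else q)"
      using exists_profiles_two_block_systems[OF assms(2) False Y(1) LY Y(2)] unfolding D_def by blast
    have "D \<le> q"
      unfolding D_def by (meson diff_le_self le_trans mod_less_eq_dividend)
    have "D < r"
      using r_pos by (simp add: D_def)
    have "(r * (n div r) - (n - r)) * D \<le> (r - 1)^2"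
      unfolding power2_eq_square
    proof (rule mult_le_mono)
      have "n mod r \<noteq> 0" "r * (n div r) + n mod r = n"
        using False by (simp_all add: dvd_eq_mod_eq_0)
      then show "r * (n div r) - (n - r) \<le> r - 1"
        by linarith
      show "D \<le> r - 1"
        using \<open>D < r\<close> by linarith
    qed
    then show ?thesis
      using matching_number_interval_deficit[OF cs \<open>D \<le> q\<close> times_div_less_eq_dividend sum_parts r_pos]
      by linarith
  qed
qed

end

lemma real_div_le_of_le_mult_add:
  fixes N m d r :: nat
  assumes "N \<le> r * m + d" "0 < r"
  shows "(real N - real d) / real r \<le> real m"
proof -
  have "real N \<le> real r * real m + real d"
    using assms(1) by (metis of_nat_add of_nat_le_iff of_nat_mult)
  then show ?thesis
    using assms(2) by (simp add: divide_le_eq mult.commute)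
qed

theorem theorem3p10:
  fixes n r q :: nat and \<sigma> :: "nat list" and A B :: "nat set"
  defines "s \<equiv> length \<sigma>"
      and "E \<equiv> sh_edges n r q \<sigma>"
      and "a \<equiv> (\<Sum>j\<in>A. \<sigma> ! j)"
      and "b \<equiv> (\<Sum>j\<in>B. \<sigma> ! j)"
  fixes L :: nat
  assumes L_def: "L = lcm a b"
      and part: "is_partition \<sigma> r"
      and good: "r_good \<sigma> r"
      and AB: "A \<inter> B = {}" "A \<union> B = {..<s}"
      and gcds: "gcd a b = 1" "gcd a r = 1" "gcd b r = 1"
  shows "(((r dvd q \<and> n \<ge> s) \<or> (r dvd n \<and> q \<ge> (L - 1) * (r - 1))) \<longrightarrow>
           (\<exists>M. is_perfect_matching (sh_vertices n q) E M) \<and>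
           real (matching_number E) = real (q * n) / real r)
       \<and> ((q \<ge> L * (r - 1) \<and> n \<ge> s) \<longrightarrow>
           real (matching_number E) \<ge> (real (q * n) - real (L * (r - 1)^2)) / real r)
       \<and> ((q \<ge> L * (r^2 - 1) \<and> s \<ge> 3 \<and> n \<ge> s + r) \<longrightarrow>
           real (matching_number E) \<ge> (real (q * n) - real ((r - 1)^2)) / real r)"
proof -
  have "\<sigma> \<noteq> []"
    using good by (auto simp: r_good_def)
  then interpret split_partition \<sigma> A B r a b L
    using part AB gcds L_def by unfold_locales (auto simp: is_partition_def s_def a_def b_def)
  have "real (matching_number E) = real (q * n) / real r" if "r * matching_number E = q * n"
    using that r_pos by (simp add: field_simps flip: of_nat_mult)
  then show ?thesis
    unfolding E_def s_def
    using perfect_matching_if_dvd_q perfect_matching_if_dvd_n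
      real_div_le_of_le_mult_add[OF matching_number_deficit_le_L r_pos]
      real_div_le_of_le_mult_add[OF matching_number_deficit_le_square r_pos]
    by (metis add.commute)
qed

end
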